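(* Let $N\in\mathbb{N}$, $s\in(0,1)$ with $N>2s$. Let $\mathcal{G}_{s,\infty}$ and $\mathcal{P}_{s,\infty}$ be the Green kernel and the Poisson kernel of $(-\Delta)^s$ in $\mathbb{R}^N_+$ given by $$\mathcal{G}_{s,\infty}(x,y)=\begin{cases}\frac{\kappa_{N,s}}{2}|x-y|^{2s-N}\int_0^{\frac{4x_1y_1}{|x-y|^2}}t^{s-1}(t+1)^{-\frac N2}dt, & x,y\in\mathbb{R}^N_+,\\ 0, & x\notin\mathbb{R}^N_+\text{ or }y\notin\mathbb{R}^N_+,\end{cases}$$ $$\mathcal{P}_{s,\infty}(x,y)=\mathcal{K}_s\Big(\frac{x_1}{-y_1}\Big)^s|x-y|^{-N},\quad x\in\mathbb{R}^N_+,\ y\in\mathbb{R}^N_-.$$ Let $\mathcal{P}_s(x)=\mathcal{K}_s|x|^{-N}x_1^s$ for $x\in\mathbb{R}^N_+$. Then, as $\epsilon\to0^+$, $$\epsilon^{-s}\mathcal{G}_{s,\infty}(\cdot,\epsilon e_1)\to\mathcal{P}_s\qquad\text{and}\qquad \epsilon^{s}\mathcal{P}_{s,\infty}(\cdot,-\epsilon e_1)\to\mathcal{P}_s,$$ both in $L^1_s(\mathbb{R}^N_+)$ and uniformly on every compact subset of $\mathbb{R}^N_+$.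
   Context: Write $x=(x_1,x')$, $\mathbb{R}^N_+=(0,\infty)\times\mathbb{R}^{N-1}$, $\mathbb{R}^N_-=(-\infty,0)\times\mathbb{R}^{N-1}$, $e_1=(1,0,\dots,0)$. Constants: $\kappa_{N,s}=\pi^{-(N/2+1)}\Gamma(N/2)\sin(\pi s)$ and $\mathcal{K}_s=\kappa_{N,s}2^{2s-1}s^{-1}$. Convergence $f_\epsilon\to f$ in $L^1_s(\mathbb{R}^N_+)$ means $\int_{\mathbb{R}^N_+}\frac{|f_\epsilon(x)-f(x)|}{1+|x|^{N+2s}}dx\to0$. *)

theory Defs
  imports "HOL-Analysis.Analysis"
begin

text \<open>Dimension N = DIM('a); the first coordinate x_1 is x \<bullet> e for a fixed
  basis vector e (e plays the role of e_1).\<close>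

definition kappa_Ns :: "real \<Rightarrow> real \<Rightarrow> real" where
  "kappa_Ns N s = pi powr (-(N/2 + 1)) * Gamma (N/2) * sin (pi * s)"

definition K_s :: "real \<Rightarrow> real \<Rightarrow> real" where
  "K_s N s = kappa_Ns N s * 2 powr (2 * s - 1) / s"

definition half_space :: "'a::euclidean_space \<Rightarrow> 'a set" where
  "half_space e = {x. x \<bullet> e > 0}"

definition neg_half_space :: "'a::euclidean_space \<Rightarrow> 'a set" where
  "neg_half_space e = {x. x \<bullet> e < 0}"

definition green_half :: "real \<Rightarrow> 'a::euclidean_space \<Rightarrow> 'a \<Rightarrow> 'a \<Rightarrow> real" where
  "green_half s e x y =
     (if x \<in> half_space e \<and> y \<in> half_space e then
        kappa_Ns (real DIM('a)) s / 2 * norm (x - y) powr (2 * s - real DIM('a)) *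
        integral {0 .. 4 * (x \<bullet> e) * (y \<bullet> e) / (norm (x - y))\<^sup>2}
          (\<lambda>t. t powr (s - 1) * (t + 1) powr (- real DIM('a) / 2))
      else 0)"

definition poisson_half :: "real \<Rightarrow> 'a::euclidean_space \<Rightarrow> 'a \<Rightarrow> 'a \<Rightarrow> real" where
  "poisson_half s e x y =
     (if x \<in> half_space e \<and> y \<in> neg_half_space e then
        K_s (real DIM('a)) s * ((x \<bullet> e) / (- (y \<bullet> e))) powr s * norm (x - y) powr (- real DIM('a))
      else 0)"

definition poisson_lim :: "real \<Rightarrow> 'a::euclidean_space \<Rightarrow> 'a \<Rightarrow> real" where
  "poisson_lim s e x = K_s (real DIM('a)) s * norm x powr (- real DIM('a)) * (x \<bullet> e) powr s"

definition L1s_conv_at_right0 :: "real \<Rightarrow> 'a::euclidean_space \<Rightarrow> (real \<Rightarrow> 'a \<Rightarrow> real) \<Rightarrow> ('a \<Rightarrow> real) \<Rightarrow> bool" where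
  "L1s_conv_at_right0 s e f g \<longleftrightarrow>
     ((\<lambda>\<epsilon>. \<integral>\<^sup>+ x. indicator (half_space e) x *
          ennreal (\<bar>f \<epsilon> x - g x\<bar> / (1 + norm x powr (real DIM('a) + 2 * s))) \<partial>lebesgue)
      \<longlongrightarrow> 0) (at_right 0)"

end

theory Submission
  imports Defs
begin

(* Write N = DIM('a), x1 = x . e, P_s = poisson_lim s e and a = 4 x1 eps / |x - eps e|^2.
   Both rescaled kernels are explicit:
     eps^s P(x, -eps e)  = K_s x1^s |x + eps e|^-N,
     eps^-s G(x, eps e)  = K_s x1^s |x - eps e|^-N J(a),
   where J(a) = s a^-s int_0^a t^(s-1) (1+t)^(-N/2) dt (beta_upto_ratio below) lies between
   (1+a)^(-N/2) and 1, hence extends continuously by J(0) = 1.  So both are jointly continuous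
   in (eps, x) on [0, d] x C for a compact C in the half space, and equal P_s(x) at eps = 0:
   this gives uniform convergence on compact sets.

   For convergence in L^1_s, uniform convergence handles a large compact set and domination the
   rest.  The Poisson term is bounded by P_s itself.  The Green term is bounded by 4^N P_s outside
   the ball B(eps e, eps/2), and inside it by const * eps^-s |x - eps e|^(2s-N), whose integral
   is O(eps^s).  Finally P_s is L^1_s-integrable: it is O(|x|^(s-N)) near the origin and, after
   weighting, O(|x|^(-2N-s)) at infinity. *)

section \<open>The truncated beta integral\<close>

definition beta_upto :: "real \<Rightarrow> real \<Rightarrow> real \<Rightarrow> real" where
  "beta_upto s q a = integral {0..a} (\<lambda>t. t powr (s - 1) * (t + 1) powr q)"

lemma powr_nonpos_le_1: "1 \<le> (x::real) \<Longrightarrow> q \<le> 0 \<Longrightarrow> x powr q \<le> 1"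
  using powr_mono[of q 0 x] by simp

lemma has_integral_powr_minus_1_from_0:
  fixes s a :: real
  assumes "0 < s" "0 \<le> a"
  shows "((\<lambda>t. t powr (s - 1)) has_integral a powr s / s) {0..a}"
  using has_integral_powr_from_0[of "s - 1" a] assms by simp

lemma beta_integrand_integrable:
  fixes s q a :: real
  assumes "0 < s" "q \<le> 0" "0 \<le> a"
  shows "(\<lambda>t. t powr (s - 1) * (t + 1) powr q) integrable_on {0..a}"
proof -
  have "(\<lambda>t. t powr (s - 1)) absolutely_integrable_on {0..a}"
    using has_integral_powr_minus_1_from_0[OF assms(1,3)]
    by (intro nonnegative_absolutely_integrable_1) auto
  moreover have "(\<lambda>t. (t + 1) powr q) \<in> borel_measurable (lebesgue_on {0..a})"
    by (intro continuous_imp_measurable_on_sets_lebesgue continuous_intros) auto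
  moreover have "bounded ((\<lambda>t. (t + 1) powr q) ` {0..a})"
    using assms(2) by (intro boundedI[of _ 1]) (auto intro!: powr_nonpos_le_1)
  ultimately have "(\<lambda>t. (t + 1) powr q * t powr (s - 1)) absolutely_integrable_on {0..a}"
    by (intro absolutely_integrable_bounded_measurable_product_real) auto
  then show ?thesis
    by (simp add: mult.commute absolutely_integrable_on_def)
qed

lemma beta_upto_nonneg:
  fixes s q a :: real
  shows "0 < s \<Longrightarrow> q \<le> 0 \<Longrightarrow> 0 \<le> a \<Longrightarrow> 0 \<le> beta_upto s q a"
  unfolding beta_upto_def by (intro integral_nonneg beta_integrand_integrable) auto

lemma beta_upto_le:
  fixes s q a :: real
  assumes "0 < s" "q \<le> 0" "0 \<le> a"
  shows "beta_upto s q a \<le> a powr s / s"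
  unfolding beta_upto_def
proof (rule has_integral_le[OF integrable_integral])
  show "(\<lambda>t. t powr (s - 1) * (t + 1) powr q) integrable_on {0..a}"
    by (rule beta_integrand_integrable[OF assms])
  show "((\<lambda>t. t powr (s - 1)) has_integral a powr s / s) {0..a}"
    by (rule has_integral_powr_minus_1_from_0[OF assms(1,3)])
qed (auto intro!: mult_left_le powr_nonpos_le_1 assms(2))

lemma beta_upto_ge:
  fixes s q a :: real
  assumes "0 < s" "q \<le> 0" "0 \<le> a"
  shows "(1 + a) powr q * (a powr s / s) \<le> beta_upto s q a"
  unfolding beta_upto_def
proof (rule has_integral_le[OF has_integral_mult_right integrable_integral])
  show "((\<lambda>t. t powr (s - 1)) has_integral a powr s / s) {0..a}"
    by (rule has_integral_powr_minus_1_from_0[OF assms(1,3)])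
  show "(\<lambda>t. t powr (s - 1) * (t + 1) powr q) integrable_on {0..a}"
    by (rule beta_integrand_integrable[OF assms])
  fix t assume "t \<in> {0..a}"
  then have "(1 + a) powr q \<le> (t + 1) powr q"
    using assms by (intro powr_mono2') auto
  then show "(1 + a) powr q * t powr (s - 1) \<le> t powr (s - 1) * (t + 1) powr q"
    by (simp add: mult.commute mult_left_mono)
qed

lemma beta_upto_bounded:
  fixes s q a :: real
  assumes "0 < s" "s + q < 0" "0 \<le> a"
  shows "beta_upto s q a \<le> 1 / s - 1 / (s + q)"
proof (cases "a \<le> 1")
  case True
  have "beta_upto s q a \<le> a powr s / s"
    using assms by (intro beta_upto_le) auto
  also have "\<dots> \<le> 1 / s"
    using True assms by (intro divide_right_mono powr_le1) auto
  finally show ?thesis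
    using divide_pos_neg[of 1 "s + q"] assms by linarith
next
  case False
  let ?h = "\<lambda>t. t powr (s - 1) * (t + 1) powr q"
  let ?p = "\<lambda>t. t powr (s + q - 1)"
  have q: "q \<le> 0" using assms by linarith
  have int: "?h integrable_on {0..a}"
    using assms q by (intro beta_integrand_integrable) auto
  have tail: "(?p has_integral - 1 / (s + q)) {1..}"
    using has_integral_powr_to_inf[of "s + q - 1" 1] assms by simp
  have "beta_upto s q a = integral {0..1} ?h + integral {1..a} ?h"
    unfolding beta_upto_def using False int
    by (intro Henstock_Kurzweil_Integration.integral_combine[symmetric]) auto
  also have "integral {0..1} ?h \<le> 1 / s"
    using beta_upto_le[OF assms(1) q, of 1] by (simp add: beta_upto_def)
  also have "integral {1..a} ?h \<le> integral {1..a} ?p"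
  proof (rule integral_le)
    show "?h integrable_on {1..a}"
      by (rule integrable_subinterval_real[OF int]) auto
    show "?p integrable_on {1..a}"
      by (intro integrable_continuous_interval continuous_intros) auto
    fix t :: real assume t: "t \<in> {1..a}"
    then have "(t + 1) powr q \<le> t powr q"
      using q by (intro powr_mono2') auto
    moreover have "?p t = t powr (s - 1) * t powr q"
      using t by (simp add: powr_add[symmetric] algebra_simps)
    ultimately show "?h t \<le> ?p t"
      by (simp add: mult_left_mono)
  qed
  also have "\<dots> \<le> integral {1..} ?p"
    using tail by (intro integral_subset_le integrable_continuous_interval continuous_intros) auto
  finally show ?thesis
    using integral_unique[OF tail] by simp
qed

lemma continuous_on_beta_upto:
  fixes s q M :: real
  assumes "0 < s" "q \<le> 0" "0 \<le> M"
  shows "continuous_on {0..M} (beta_upto s q)"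
  unfolding beta_upto_def
  by (rule indefinite_integral_continuous_1[OF beta_integrand_integrable[OF assms]])

(* The value at a = 0 is the limit as a -> 0+, see continuous_on_beta_upto_ratio. *)
definition beta_upto_ratio :: "real \<Rightarrow> real \<Rightarrow> real \<Rightarrow> real" where
  "beta_upto_ratio s q a = (if a = 0 then 1 else s * beta_upto s q a / a powr s)"

lemma beta_upto_eq_ratio:
  fixes s q a :: real
  assumes "0 < s" "0 < a"
  shows "beta_upto s q a = beta_upto_ratio s q a * a powr s / s"
  using assms by (simp add: beta_upto_ratio_def)

lemma beta_upto_ratio_bounds:
  fixes s q a :: real
  assumes "0 < s" "q \<le> 0" "0 \<le> a"
  shows "(1 + a) powr q \<le> beta_upto_ratio s q a" "beta_upto_ratio s q a \<le> 1"
proof -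
  have "(1 + a) powr q \<le> beta_upto_ratio s q a \<and> beta_upto_ratio s q a \<le> 1"
  proof (cases "a = 0")
    case False
    then have "0 < a powr s" using assms by simp
    moreover have "s * beta_upto s q a \<le> a powr s"
      using beta_upto_le[OF assms] assms(1) by (simp add: field_simps)
    moreover have "(1 + a) powr q * a powr s \<le> s * beta_upto s q a"
      using beta_upto_ge[OF assms] assms(1) by (simp add: field_simps)
    ultimately show ?thesis
      using False by (simp add: beta_upto_ratio_def pos_le_divide_eq pos_divide_le_eq)
  qed (simp add: beta_upto_ratio_def)
  then show "(1 + a) powr q \<le> beta_upto_ratio s q a" "beta_upto_ratio s q a \<le> 1"
    by auto
qed

lemma beta_upto_ratio_nonneg:
  fixes s q a :: real
  shows "0 < s \<Longrightarrow> q \<le> 0 \<Longrightarrow> 0 \<le> a \<Longrightarrow> 0 \<le> beta_upto_ratio s q a"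
  using beta_upto_ratio_bounds(1)[of s q a] by (meson order_trans powr_ge_zero)

lemma continuous_on_beta_upto_ratio:
  fixes s q M :: real
  assumes "0 < s" "q \<le> 0" "0 \<le> M"
  shows "continuous_on {0..M} (beta_upto_ratio s q)"
  unfolding continuous_on_eq_continuous_within
proof
  fix a assume a: "a \<in> {0..M}"
  show "continuous (at a within {0..M}) (beta_upto_ratio s q)"
  proof (cases "a = 0")
    case True
    have lim: "((\<lambda>b. (1 + b) powr q) \<longlongrightarrow> 1) (at 0 within {0..M})"
    proof -
      have "((\<lambda>b. (1 + b) powr q) \<longlongrightarrow> (1 + 0) powr q) (at 0 within {0..M})"
        by (intro tendsto_powr tendsto_add tendsto_const tendsto_ident_at) simp
      then show ?thesis by simp
    qed
    have "\<forall>\<^sub>F b in at 0 within {0..M}. (1 + b) powr q \<le> beta_upto_ratio s q b"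
      "\<forall>\<^sub>F b in at 0 within {0..M}. beta_upto_ratio s q b \<le> 1"
      using beta_upto_ratio_bounds[OF assms(1,2)] by (auto simp: eventually_at_filter)
    then have "(beta_upto_ratio s q \<longlongrightarrow> 1) (at 0 within {0..M})"
      using lim by (rule tendsto_sandwich[OF _ _ _ tendsto_const])
    then show ?thesis
      using True by (simp add: continuous_within beta_upto_ratio_def)
  next
    case False
    with a have "0 < a" by auto
    have "continuous (at a within {0..M}) (beta_upto s q)"
      using continuous_on_beta_upto[OF assms] a by (simp add: continuous_on_eq_continuous_within)
    then have "continuous (at a within {0..M}) (\<lambda>b. s * beta_upto s q b / b powr s)"
      using \<open>0 < a\<close> by (intro continuous_intros) auto
    then show ?thesis
    proof (rule continuous_transform_within[where \<delta> = a])
      fix b assume "b \<in> {0..M}" "dist b a < a"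
      then show "s * beta_upto s q b / b powr s = beta_upto_ratio s q b"
        by (auto simp: beta_upto_ratio_def dist_real_def)
    qed (use \<open>0 < a\<close> a in auto)
  qed
qed

section \<open>Integrals of powers of the distance to a point\<close>

lemma nn_integral_le_suminf_cball:
  fixes p :: "'a::euclidean_space" and f :: "'a \<Rightarrow> real"
  assumes f_le: "\<And>x. ennreal (f x) \<le> (\<Sum>k. ennreal (c k * indicator (cball p (r k)) x))"
    and c: "\<And>k. 0 \<le> c k" and r: "\<And>k. 0 \<le> r k"
    and summable: "summable (\<lambda>k. c k * (unit_ball_vol (real DIM('a)) * r k ^ DIM('a)))"
  shows "(\<integral>\<^sup>+x. ennreal (f x) \<partial>lborel) \<le> ennreal (\<Sum>k. c k * (unit_ball_vol (real DIM('a)) * r k ^ DIM('a)))"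
proof -
  have ball: "(\<integral>\<^sup>+x. ennreal (c k * indicator (cball p (r k)) x) \<partial>lborel)
      = ennreal (c k * (unit_ball_vol (real DIM('a)) * r k ^ DIM('a)))" for k
  proof -
    have "(\<integral>\<^sup>+x. ennreal (c k * indicator (cball p (r k)) x) \<partial>lborel)
        = (\<integral>\<^sup>+x. ennreal (c k) * indicator (cball p (r k)) x \<partial>lborel)"
      by (intro nn_integral_cong) (auto simp: indicator_def)
    also have "\<dots> = ennreal (c k) * emeasure lborel (cball p (r k))"
      by (rule nn_integral_cmult_indicator) simp
    finally show ?thesis
      using r[of k] c[of k] by (simp add: emeasure_cball ennreal_mult)
  qed
  have "(\<integral>\<^sup>+x. ennreal (f x) \<partial>lborel) \<le> (\<integral>\<^sup>+x. (\<Sum>k. ennreal (c k * indicator (cball p (r k)) x)) \<partial>lborel)"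
    by (intro nn_integral_mono f_le)
  also have "\<dots> = (\<Sum>k. \<integral>\<^sup>+x. ennreal (c k * indicator (cball p (r k)) x) \<partial>lborel)"
    by (rule nn_integral_suminf) (measurable, simp add: pred_def borel_closed)
  also have "\<dots> = ennreal (\<Sum>k. c k * (unit_ball_vol (real DIM('a)) * r k ^ DIM('a)))"
    unfolding ball using c r summable
    by (intro suminf_ennreal2) (auto intro!: mult_nonneg_nonneg unit_ball_vol_nonneg)
  finally show ?thesis .
qed

lemma dyadic_bracket:
  fixes t :: real
  assumes "1 \<le> t"
  obtains k :: nat where "2 ^ k \<le> t" "t < 2 ^ Suc k"
proof -
  define k where "k = nat \<lfloor>log 2 t\<rfloor>"
  have "0 \<le> log 2 t" using assms by simp
  then have "real_of_int \<lfloor>log 2 t\<rfloor> = real k"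
    by (simp add: k_def)
  then have "2 powr real k \<le> t \<and> t < 2 powr (real k + 1)"
    using floor_log_eq_powr_iff[of t 2 "\<lfloor>log 2 t\<rfloor>"] assms by simp
  then show ?thesis
    using that[of k] by (simp add: powr_realpow[symmetric] powr_add mult.commute)
qed

(* On the k-th shell |x - p|^-alpha <= (rho mu^k / 2)^-alpha; weighted by these bounds, the
   volumes of the balls of radius rho mu^k form a geometric series of ratio mu^(N - alpha). *)
lemma nn_integral_norm_powr_dyadic_le:
  fixes p :: "'a::euclidean_space" and \<alpha> \<rho> \<mu> :: real
  assumes \<alpha>: "0 \<le> \<alpha>" and \<rho>: "0 < \<rho>" and \<mu>: "0 < \<mu>" "\<mu> powr (real DIM('a) - \<alpha>) < 1"
    and cover: "\<And>x. x \<in> A \<Longrightarrow> x \<noteq> p \<Longrightarrow>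
      \<exists>k. \<rho> * \<mu> ^ k / 2 \<le> norm (x - p) \<and> norm (x - p) \<le> \<rho> * \<mu> ^ k"
  shows "(\<integral>\<^sup>+x. ennreal (indicator A x * norm (x - p) powr (-\<alpha>)) \<partial>lborel)
    \<le> ennreal (unit_ball_vol (real DIM('a)) * 2 powr \<alpha> * \<rho> powr (real DIM('a) - \<alpha>) / (1 - \<mu> powr (real DIM('a) - \<alpha>)))"
proof -
  define V where "V = unit_ball_vol (real DIM('a))"
  define \<theta> where "\<theta> = \<mu> powr (real DIM('a) - \<alpha>)"
  define r where "r k = \<rho> * \<mu> ^ k" for k
  define c where "c k = (r k / 2) powr (-\<alpha>)" for k
  have r: "0 < r k" for k
    using \<rho> \<mu> by (simp add: r_def)
  have summand: "c k * (V * r k ^ DIM('a)) = V * 2 powr \<alpha> * \<rho> powr (real DIM('a) - \<alpha>) * \<theta> ^ k" for k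
  proof -
    have "c k * r k ^ DIM('a) = 2 powr \<alpha> * r k powr (real DIM('a) - \<alpha>)"
      using r[of k] by (simp add: c_def powr_divide powr_minus powr_diff powr_realpow field_simps)
    also have "r k powr (real DIM('a) - \<alpha>) = \<rho> powr (real DIM('a) - \<alpha>) * \<theta> ^ k"
      using \<rho> \<mu> by (simp add: r_def \<theta>_def powr_mult powr_realpow[symmetric] powr_powr mult.commute)
    finally show ?thesis
      by (simp add: mult_ac)
  qed
  have "(\<integral>\<^sup>+x. ennreal (indicator A x * norm (x - p) powr (-\<alpha>)) \<partial>lborel)
      \<le> ennreal (\<Sum>k. c k * (V * r k ^ DIM('a)))"
    unfolding V_def
  proof (rule nn_integral_le_suminf_cball)
    show "0 \<le> c k" "0 \<le> r k" for k
      using r[of k] by (auto simp: c_def)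
    show "summable (\<lambda>k. c k * (unit_ball_vol (real DIM('a)) * r k ^ DIM('a)))"
      unfolding summand[unfolded V_def] using \<mu> by (simp add: \<theta>_def)
    fix x
    show "ennreal (indicator A x * norm (x - p) powr -\<alpha>)
        \<le> (\<Sum>k. ennreal (c k * indicator (cball p (r k)) x))"
    proof (cases "x \<in> A \<and> x \<noteq> p")
      case True
      then obtain k where k: "r k / 2 \<le> norm (x - p)" "norm (x - p) \<le> r k"
        using cover unfolding r_def by blast
      have "ennreal (indicator A x * norm (x - p) powr -\<alpha>) \<le> ennreal (c k * indicator (cball p (r k)) x)"
        using True k r[of k] \<alpha>
        by (intro ennreal_leI) (auto simp: c_def dist_norm norm_minus_commute intro!: powr_mono2')
      also have "\<dots> \<le> (\<Sum>k. ennreal (c k * indicator (cball p (r k)) x))"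
        using sum_le_suminf[OF summableI, of "{k}" "\<lambda>k. ennreal (c k * indicator (cball p (r k)) x)"]
        by simp
      finally show ?thesis .
    qed (auto simp: indicator_def)
  qed
  also have "(\<Sum>k. c k * (V * r k ^ DIM('a))) = V * 2 powr \<alpha> * \<rho> powr (real DIM('a) - \<alpha>) / (1 - \<theta>)"
    unfolding summand using \<mu> by (simp add: \<theta>_def suminf_mult suminf_geometric)
  finally show ?thesis
    by (simp add: V_def \<theta>_def)
qed

lemma nn_integral_cball_norm_powr_le:
  fixes p :: "'a::euclidean_space" and \<alpha> r :: real
  assumes "0 < \<alpha>" "\<alpha> < real DIM('a)" "0 < r"
  shows "(\<integral>\<^sup>+x. ennreal (indicator (cball p r) x * norm (x - p) powr (-\<alpha>)) \<partial>lborel)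
    \<le> ennreal (unit_ball_vol (real DIM('a)) * 2 powr \<alpha> * r powr (real DIM('a) - \<alpha>) / (1 - (1/2) powr (real DIM('a) - \<alpha>)))"
proof (rule nn_integral_norm_powr_dyadic_le)
  show "(1/2::real) powr (real DIM('a) - \<alpha>) < 1"
    using powr_less_mono2[of "real DIM('a) - \<alpha>" "1/2" 1] assms by simp
  fix x assume x: "x \<in> cball p r" "x \<noteq> p"
  then have d: "0 < norm (x - p)" "norm (x - p) \<le> r"
    by (auto simp: dist_norm norm_minus_commute)
  then obtain k :: nat where k: "2 ^ k \<le> r / norm (x - p)" "r / norm (x - p) < 2 ^ Suc k"
    using dyadic_bracket[of "r / norm (x - p)"] by auto
  then have "r * (1/2) ^ k / 2 \<le> norm (x - p) \<and> norm (x - p) \<le> r * (1/2) ^ k"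
    using d by (simp add: field_simps)
  then show "\<exists>k. r * (1/2) ^ k / 2 \<le> norm (x - p) \<and> norm (x - p) \<le> r * (1/2) ^ k" ..
qed (use assms in auto)

lemma nn_integral_outside_cball_norm_powr_finite:
  fixes p :: "'a::euclidean_space" and \<beta> r :: real
  assumes "real DIM('a) < \<beta>" "0 < r"
  shows "(\<integral>\<^sup>+x. ennreal (indicator (- cball p r) x * norm (x - p) powr (-\<beta>)) \<partial>lborel) < \<infinity>"
proof -
  have "(\<integral>\<^sup>+x. ennreal (indicator (- cball p r) x * norm (x - p) powr (-\<beta>)) \<partial>lborel)
    \<le> ennreal (unit_ball_vol (real DIM('a)) * 2 powr \<beta> * (2 * r) powr (real DIM('a) - \<beta>) / (1 - 2 powr (real DIM('a) - \<beta>)))"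
  proof (rule nn_integral_norm_powr_dyadic_le)
    show "(2::real) powr (real DIM('a) - \<beta>) < 1"
      using powr_less_mono[of "real DIM('a) - \<beta>" 0 2] assms by simp
    fix x assume x: "x \<in> - cball p r"
    then have d: "r < norm (x - p)"
      by (auto simp: dist_norm norm_minus_commute)
    then obtain k :: nat where k: "2 ^ k \<le> norm (x - p) / r" "norm (x - p) / r < 2 ^ Suc k"
      using dyadic_bracket[of "norm (x - p) / r"] assms by auto
    then have "2 * r * 2 ^ k / 2 \<le> norm (x - p) \<and> norm (x - p) \<le> 2 * r * 2 ^ k"
      using assms by (simp add: field_simps)
    then show "\<exists>k. 2 * r * 2 ^ k / 2 \<le> norm (x - p) \<and> norm (x - p) \<le> 2 * r * 2 ^ k" ..
  qed (use assms in auto)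
  also have "\<dots> < \<infinity>"
    by simp
  finally show ?thesis .
qed

section \<open>Two convergence criteria\<close>

lemma uniform_limit_at_right_0_of_continuous_on:
  fixes F :: "real \<times> 'a::metric_space \<Rightarrow> 'b::metric_space"
  assumes "compact C" "0 < d" "continuous_on ({0..d} \<times> C) F"
    and "\<And>\<epsilon> x. \<epsilon> \<in> {0<..d} \<Longrightarrow> x \<in> C \<Longrightarrow> f \<epsilon> x = F (\<epsilon>, x)"
    and "\<And>x. x \<in> C \<Longrightarrow> g x = F (0, x)"
  shows "uniform_limit C f g (at_right 0)"
  unfolding uniform_limit_iff
proof (intro allI impI)
  fix \<eta> :: real assume "0 < \<eta>"
  have "uniformly_continuous_on ({0..d} \<times> C) F"
    using assms by (intro compact_uniformly_continuous compact_Times) auto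
  then obtain \<delta> where "0 < \<delta>" and \<delta>: "\<And>p p'. p \<in> {0..d} \<times> C \<Longrightarrow> p' \<in> {0..d} \<times> C \<Longrightarrow>
      dist p' p < \<delta> \<Longrightarrow> dist (F p') (F p) < \<eta>"
    using \<open>0 < \<eta>\<close> unfolding uniformly_continuous_on_def by metis
  have "\<forall>\<^sub>F \<epsilon> in at_right 0. \<epsilon> < min \<delta> d"
    using eventually_at_right_real[of 0 "min \<delta> d"] \<open>0 < \<delta>\<close> assms(2)
    by (auto elim: eventually_mono)
  then show "\<forall>\<^sub>F \<epsilon> in at_right 0. \<forall>x\<in>C. dist (f \<epsilon> x) (g x) < \<eta>"
    using eventually_at_right_less[of 0]
  proof eventually_elim
    case (elim \<epsilon>)
    then show ?case
      using \<delta>[of "(0, x)" "(\<epsilon>, x)" for x] assms(4,5) by (auto simp: dist_Pair_Pair)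
  qed
qed

lemma ennreal_tendsto_0I:
  fixes \<Phi> :: "'b \<Rightarrow> ennreal"
  assumes "\<And>\<eta>. 0 < \<eta> \<Longrightarrow> \<forall>\<^sub>F \<epsilon> in F. \<Phi> \<epsilon> \<le> ennreal \<eta>"
  shows "(\<Phi> \<longlongrightarrow> 0) F"
proof (rule order_tendstoI)
  fix a :: ennreal assume "0 < a"
  then obtain b where "0 < b" "b < a"
    using dense by blast
  moreover from this obtain \<eta> where "b = ennreal \<eta>" "0 \<le> \<eta>"
    by (cases b) (auto simp: top_unique less_le_not_le)
  ultimately have "0 < \<eta>" "ennreal \<eta> < a"
    by auto
  then show "\<forall>\<^sub>F \<epsilon> in F. \<Phi> \<epsilon> < a"
    using assms[of \<eta>] by (auto elim: eventually_mono)
qed simp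

lemma open_half_space: "open (half_space (e::'a::euclidean_space))"
  using open_halfspace_gt[of 0 e] by (simp add: half_space_def inner_commute)

lemma half_space_compact_exhaustion:
  fixes e :: "'a::euclidean_space"
  obtains K :: "nat \<Rightarrow> 'a set" where "\<And>n. compact (K n)" "\<And>n. K n \<subseteq> half_space e"
    "\<And>x. x \<in> half_space e \<Longrightarrow> \<forall>\<^sub>F n in sequentially. x \<in> K n"
proof
  define K where "K n = {x. 1 / real (Suc n) \<le> x \<bullet> e} \<inter> cball 0 (real (Suc n))" for n
  show "compact (K n)" for n
    unfolding K_def
    using closed_halfspace_ge[of "1 / real (Suc n)" e]
    by (intro closed_Int_compact compact_cball) (simp add: inner_commute)
  show "K n \<subseteq> half_space e" for n
    by (auto simp: K_def half_space_def intro: less_le_trans[rotated])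
  fix x assume "x \<in> half_space e"
  then have "0 < x \<bullet> e"
    by (simp add: half_space_def)
  then obtain n1 where n1: "inverse (real (Suc n1)) < x \<bullet> e"
    using reals_Archimedean by blast
  obtain n2 where n2: "norm x \<le> real n2"
    using real_arch_simple by blast
  have "x \<in> K n" if "max n1 n2 \<le> n" for n
  proof -
    have "1 / real (Suc n) \<le> inverse (real (Suc n1))"
      using that by (simp add: divide_simps)
    then show ?thesis
      using n1 n2 that by (simp add: K_def)
  qed
  then show "\<forall>\<^sub>F n in sequentially. x \<in> K n"
    unfolding eventually_sequentially by blast
qed

lemma half_space_compact_tail_small:
  fixes e :: "'a::euclidean_space" and G :: "'a \<Rightarrow> real"
  assumes G: "G \<in> borel_measurable borel" "\<And>x. 0 \<le> G x"
    and G_finite: "(\<integral>\<^sup>+x. ennreal (indicator (half_space e) x * G x) \<partial>lborel) < \<infinity>"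
    and "0 < \<eta>"
  obtains K where "compact K" "K \<subseteq> half_space e"
    "(\<integral>\<^sup>+x. ennreal (indicator (half_space e - K) x * G x) \<partial>lborel) < ennreal \<eta>"
proof -
  define H where "H = half_space e"
  obtain K where compact: "\<And>n. compact (K n)" and sub: "\<And>n. K n \<subseteq> H"
    and eventually_in: "\<And>x. x \<in> H \<Longrightarrow> \<forall>\<^sub>F n in sequentially. x \<in> K n"
    using half_space_compact_exhaustion[of e] unfolding H_def by metis
  have borel: "H \<in> sets borel" "K n \<in> sets borel" for n
    using open_half_space[of e] compact by (auto simp: H_def borel_compact)
  have "(\<lambda>n. \<integral>\<^sup>+x. ennreal (indicator (H - K n) x * G x) \<partial>lborel) \<longlonglongrightarrow> (\<integral>\<^sup>+x. 0 \<partial>(lborel :: 'a measure))"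
  proof (rule nn_integral_dominated_convergence[where u = "\<lambda>n x. ennreal (indicator (H - K n) x * G x)"
        and u' = "\<lambda>x. 0" and w = "\<lambda>x. ennreal (indicator H x * G x)"])
    show "AE x in lborel. (\<lambda>n. ennreal (indicator (H - K n) x * G x)) \<longlonglongrightarrow> 0"
    proof (rule AE_I2)
      fix x
      show "(\<lambda>n. ennreal (indicator (H - K n) x * G x)) \<longlonglongrightarrow> 0"
      proof (cases "x \<in> H")
        case True
        then show ?thesis
          by (intro tendsto_eventually) (auto elim: eventually_mono[OF eventually_in])
      qed simp
    qed
  qed (use borel G G_finite in \<open>auto simp: H_def indicator_def intro!: ennreal_leI\<close>)
  then have "\<forall>\<^sub>F n in sequentially. (\<integral>\<^sup>+x. ennreal (indicator (H - K n) x * G x) \<partial>lborel) < ennreal \<eta>"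
    using \<open>0 < \<eta>\<close> by (intro order_tendstoD(2)) auto
  then obtain n where "(\<integral>\<^sup>+x. ennreal (indicator (H - K n) x * G x) \<partial>lborel) < ennreal \<eta>"
    by (auto simp: eventually_sequentially)
  then show ?thesis
    using that compact sub by (auto simp: H_def)
qed

lemma nn_integral_ennreal_cmult:
  fixes f :: "'a \<Rightarrow> real"
  assumes "0 \<le> c" "\<And>x. 0 \<le> f x" "f \<in> borel_measurable M"
  shows "(\<integral>\<^sup>+x. ennreal (c * f x) \<partial>M) = ennreal c * (\<integral>\<^sup>+x. ennreal (f x) \<partial>M)"
  using assms by (simp add: ennreal_mult nn_integral_cmult)

lemma nn_integral_const_indicator_compact:
  fixes K :: "'a::euclidean_space set"
  assumes "compact K" "0 \<le> c"
  shows "(\<integral>\<^sup>+x. ennreal (c * indicator K x) \<partial>lborel) = ennreal (c * measure lborel K)"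
proof -
  have "(\<integral>\<^sup>+x. ennreal (c * indicator K x) \<partial>lborel) = (\<integral>\<^sup>+x. ennreal c * indicator K x \<partial>lborel)"
    by (intro nn_integral_cong) (auto simp: indicator_def)
  also have "\<dots> = ennreal c * emeasure lborel K"
    using assms by (intro nn_integral_cmult_indicator) (auto simp: borel_compact)
  finally show ?thesis
    using assms emeasure_compact_finite[of K]
    by (simp add: emeasure_eq_ennreal_measure ennreal_mult)
qed

lemma nn_integral_weighted_diff_le:
  fixes e :: "'a::euclidean_space" and f g w G E :: "'a \<Rightarrow> real"
  assumes K: "compact K" "K \<subseteq> half_space e"
    and close: "\<And>x. x \<in> K \<Longrightarrow> \<bar>f x - g x\<bar> \<le> \<delta>" "0 \<le> \<delta>"
    and dom: "\<And>x. x \<in> half_space e \<Longrightarrow> \<bar>f x - g x\<bar> / w x \<le> G x + E x" and w: "\<And>x. 1 \<le> w x"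
    and G: "G \<in> borel_measurable borel" "\<And>x. 0 \<le> G x"
    and E: "E \<in> borel_measurable borel" "\<And>x. 0 \<le> E x"
  shows "(\<integral>\<^sup>+x. indicator (half_space e) x * ennreal (\<bar>f x - g x\<bar> / w x) \<partial>lborel)
    \<le> ennreal (\<delta> * measure lborel K) + (\<integral>\<^sup>+x. ennreal (indicator (half_space e - K) x * G x) \<partial>lborel)
      + (\<integral>\<^sup>+x. ennreal (E x) \<partial>lborel)"
proof -
  define H where "H = half_space e"
  have [measurable]: "K \<in> sets borel" "H \<in> sets borel" "G \<in> borel_measurable borel"
    "E \<in> borel_measurable borel"
    using K(1) open_half_space[of e] G(1) E(1) by (auto simp: borel_compact H_def)
  have "indicator H x * ennreal (\<bar>f x - g x\<bar> / w x)
      \<le> ennreal (\<delta> * indicator K x) + ennreal (indicator (H - K) x * G x) + ennreal (E x)" for x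
  proof (cases "x \<in> H")
    case True
    have "\<bar>f x - g x\<bar> / w x \<le> \<delta> * indicator K x + indicator (H - K) x * G x + E x"
    proof (cases "x \<in> K")
      case True
      have "\<bar>f x - g x\<bar> / w x \<le> \<bar>f x - g x\<bar>"
        using w[of x] by (simp add: divide_le_eq mult_le_cancel_left1)
      also have "\<dots> \<le> \<delta>"
        using close True by simp
      finally show ?thesis
        using True E(2)[of x] by simp
    next
      case False
      then show ?thesis
        using dom \<open>x \<in> H\<close> by (auto simp: H_def)
    qed
    then show ?thesis
      using True close(2) G(2)[of x] E(2)[of x]
      by (simp add: ennreal_plus[symmetric] ennreal_leI del: ennreal_plus)
  qed simp
  then have "(\<integral>\<^sup>+x. indicator H x * ennreal (\<bar>f x - g x\<bar> / w x) \<partial>lborel)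
      \<le> (\<integral>\<^sup>+x. ennreal (\<delta> * indicator K x) + ennreal (indicator (H - K) x * G x) + ennreal (E x) \<partial>lborel)"
    by (intro nn_integral_mono)
  also have "\<dots> = (\<integral>\<^sup>+x. ennreal (\<delta> * indicator K x) \<partial>lborel)
      + (\<integral>\<^sup>+x. ennreal (indicator (H - K) x * G x) \<partial>lborel) + (\<integral>\<^sup>+x. ennreal (E x) \<partial>lborel)"
    by (simp add: nn_integral_add)
  finally show ?thesis
    using nn_integral_const_indicator_compact[OF K(1) close(2)] by (simp add: H_def)
qed

(* Uniform convergence controls the weighted difference on a large compact set, the integrable
   majorant G on the rest of the half space, up to an error E of vanishing mass. *)
lemma L1s_conv_at_right0I:
  fixes e :: "'a::euclidean_space" and s :: real and f E :: "real \<Rightarrow> 'a \<Rightarrow> real" and g G :: "'a \<Rightarrow> real"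
  assumes unif: "\<And>C. compact C \<Longrightarrow> C \<subseteq> half_space e \<Longrightarrow> uniform_limit C f g (at_right 0)"
    and dom: "\<forall>\<^sub>F \<epsilon> in at_right 0. \<forall>x\<in>half_space e.
      \<bar>f \<epsilon> x - g x\<bar> / (1 + norm x powr (real DIM('a) + 2 * s)) \<le> G x + E \<epsilon> x"
    and G: "G \<in> borel_measurable borel" "\<And>x. 0 \<le> G x"
      "(\<integral>\<^sup>+x. ennreal (indicator (half_space e) x * G x) \<partial>lborel) < \<infinity>"
    and E: "\<And>\<epsilon>. E \<epsilon> \<in> borel_measurable borel" "\<And>\<epsilon> x. 0 \<le> E \<epsilon> x"
      "((\<lambda>\<epsilon>. \<integral>\<^sup>+x. ennreal (E \<epsilon> x) \<partial>lborel) \<longlongrightarrow> 0) (at_right 0)"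
  shows "L1s_conv_at_right0 s e f g"
proof -
  define H where "H = half_space e"
  define w where "w x = 1 + norm x powr (real DIM('a) + 2 * s)" for x :: 'a
  have "((\<lambda>\<epsilon>. \<integral>\<^sup>+x. indicator H x * ennreal (\<bar>f \<epsilon> x - g x\<bar> / w x) \<partial>lborel) \<longlongrightarrow> 0) (at_right 0)"
  proof (rule ennreal_tendsto_0I)
    fix \<eta> :: real assume "0 < \<eta>"
    then obtain K where K: "compact K" "K \<subseteq> H"
      and tail: "(\<integral>\<^sup>+x. ennreal (indicator (H - K) x * G x) \<partial>lborel) < ennreal (\<eta> / 3)"
      using half_space_compact_tail_small[OF G, of "\<eta> / 3"] unfolding H_def by auto
    define \<delta> where "\<delta> = \<eta> / 3 / (1 + measure lborel K)"
    have "0 < \<delta>"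
      using \<open>0 < \<eta>\<close> by (simp add: \<delta>_def add_pos_nonneg)
    have "\<delta> * measure lborel K \<le> \<eta> / 3"
      using \<open>0 < \<eta>\<close> measure_nonneg[of lborel K]
      by (simp add: \<delta>_def divide_le_eq add_pos_nonneg del: measure_nonneg)
    have "\<forall>\<^sub>F \<epsilon> in at_right 0. \<forall>x\<in>K. dist (f \<epsilon> x) (g x) < \<delta>"
      using unif[OF K(1) K(2)[unfolded H_def]] \<open>0 < \<delta>\<close> unfolding uniform_limit_iff by blast
    moreover have "\<forall>\<^sub>F \<epsilon> in at_right 0. (\<integral>\<^sup>+x. ennreal (E \<epsilon> x) \<partial>lborel) < ennreal (\<eta> / 3)"
      using order_tendstoD(2)[OF E(3), of "ennreal (\<eta> / 3)"] \<open>0 < \<eta>\<close> by auto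
    ultimately show "\<forall>\<^sub>F \<epsilon> in at_right 0.
        (\<integral>\<^sup>+x. indicator H x * ennreal (\<bar>f \<epsilon> x - g x\<bar> / w x) \<partial>lborel) \<le> ennreal \<eta>"
      using dom
    proof eventually_elim
      case (elim \<epsilon>)
      have "(\<integral>\<^sup>+x. indicator H x * ennreal (\<bar>f \<epsilon> x - g x\<bar> / w x) \<partial>lborel)
          \<le> ennreal (\<delta> * measure lborel K) + (\<integral>\<^sup>+x. ennreal (indicator (H - K) x * G x) \<partial>lborel)
            + (\<integral>\<^sup>+x. ennreal (E \<epsilon> x) \<partial>lborel)"
        unfolding H_def using K elim(1,3) \<open>0 < \<delta>\<close> G E(1,2)
        by (intro nn_integral_weighted_diff_le) (auto simp: H_def w_def dist_real_def)
      also have "\<dots> \<le> ennreal (\<eta> / 3) + ennreal (\<eta> / 3) + ennreal (\<eta> / 3)"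
        using \<open>\<delta> * measure lborel K \<le> \<eta> / 3\<close> tail elim(2) by (intro add_mono ennreal_leI) auto
      also have "\<dots> = ennreal \<eta>"
        using \<open>0 < \<eta>\<close> by (simp add: ennreal_plus[symmetric] del: ennreal_plus)
      finally show ?case .
    qed
  qed
  then show ?thesis
    by (simp add: L1s_conv_at_right0_def H_def w_def nn_integral_completion)
qed

section \<open>The rescaled kernels\<close>

lemma kappa_Ns_pos: "0 < s \<Longrightarrow> s < 1 \<Longrightarrow> 0 < N \<Longrightarrow> 0 < kappa_Ns N s"
  unfolding kappa_Ns_def by (intro mult_pos_pos Gamma_real_pos sin_gt_zero) auto

lemma K_s_pos: "0 < s \<Longrightarrow> s < 1 \<Longrightarrow> 0 < N \<Longrightarrow> 0 < K_s N s"
  using kappa_Ns_pos[of s N] unfolding K_s_def by simp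

lemma K_s_eq_kappa_Ns: "K_s N s = kappa_Ns N s / 2 * 4 powr s / s"
proof -
  have "(4::real) powr s = 2 * 2 powr (2 * s - 1)"
    using powr_powr[of 2 2 s] by (simp add: powr_diff)
  then show ?thesis
    unfolding K_s_def by simp
qed

lemma poisson_lim_nonneg: "0 < s \<Longrightarrow> s < 1 \<Longrightarrow> 0 \<le> poisson_lim s e (x::'a::euclidean_space)"
  using K_s_pos[of s "real DIM('a)"] unfolding poisson_lim_def by simp

lemma borel_measurable_poisson_lim [measurable]:
  "poisson_lim s (e::'a::euclidean_space) \<in> borel_measurable borel"
  unfolding poisson_lim_def by measurable

lemma poisson_half_scaled_eq:
  fixes x e :: "'a::euclidean_space" and s :: real
  assumes "e \<in> Basis" "0 < \<epsilon>" "x \<in> half_space e"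
  shows "\<epsilon> powr s * poisson_half s e x (- (\<epsilon> *\<^sub>R e))
    = K_s (real DIM('a)) s * (x \<bullet> e) powr s * norm (x + \<epsilon> *\<^sub>R e) powr (- real DIM('a))"
proof -
  have "- (\<epsilon> *\<^sub>R e) \<in> neg_half_space e"
    using assms by (simp add: neg_half_space_def inner_Basis)
  moreover have "\<epsilon> powr s * ((x \<bullet> e) / \<epsilon>) powr s = (x \<bullet> e) powr s"
    using assms by (simp add: powr_divide half_space_def)
  ultimately show ?thesis
    using assms by (simp add: poisson_half_def inner_Basis mult_ac)
qed

lemma green_half_eq_beta_upto:
  fixes x e :: "'a::euclidean_space" and s :: real
  assumes "e \<in> Basis" "0 < \<epsilon>" "x \<in> half_space e"
  shows "green_half s e x (\<epsilon> *\<^sub>R e) = kappa_Ns (real DIM('a)) s / 2 * norm (x - \<epsilon> *\<^sub>R e) powr (2 * s - real DIM('a))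
    * beta_upto s (- real DIM('a) / 2) (4 * (x \<bullet> e) * \<epsilon> / (norm (x - \<epsilon> *\<^sub>R e))\<^sup>2)"
  using assms by (simp add: green_half_def beta_upto_def half_space_def inner_Basis)

lemma green_half_scaled_eq:
  fixes x e :: "'a::euclidean_space" and s :: real
  assumes e: "e \<in> Basis" and "0 < \<epsilon>" "x \<in> half_space e" "0 < s"
  shows "\<epsilon> powr (-s) * green_half s e x (\<epsilon> *\<^sub>R e) = K_s (real DIM('a)) s * (x \<bullet> e) powr s
    * norm (x - \<epsilon> *\<^sub>R e) powr (- real DIM('a))
    * beta_upto_ratio s (- real DIM('a) / 2) (4 * (x \<bullet> e) * \<epsilon> / (norm (x - \<epsilon> *\<^sub>R e))\<^sup>2)"
proof (cases "x = \<epsilon> *\<^sub>R e")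
  case False
  define N where "N = real DIM('a)"
  define d where "d = norm (x - \<epsilon> *\<^sub>R e)"
  define x1 where "x1 = x \<bullet> e"
  define a where "a = 4 * x1 * \<epsilon> / d\<^sup>2"
  have "0 < d" "0 < x1"
    using False assms by (auto simp: d_def x1_def half_space_def)
  then have "0 < a"
    using assms by (simp add: a_def)
  have a_powr: "a powr s = 4 powr s * x1 powr s * \<epsilon> powr s / d powr (2 * s)"
    using \<open>0 < d\<close> \<open>0 < x1\<close> assms powr_powr[of d 2 s]
    by (simp add: a_def powr_divide powr_mult)
  have "green_half s e x (\<epsilon> *\<^sub>R e) = kappa_Ns N s / 2 * d powr (2 * s - N) * beta_upto s (- N / 2) a"
    using green_half_eq_beta_upto[OF assms(1-3), of s] by (simp add: N_def d_def x1_def a_def)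
  then have "\<epsilon> powr (-s) * green_half s e x (\<epsilon> *\<^sub>R e)
      = \<epsilon> powr (-s) * (kappa_Ns N s / 2 * d powr (2 * s - N) * (beta_upto_ratio s (- N / 2) a * a powr s / s))"
    unfolding beta_upto_eq_ratio[OF \<open>0 < s\<close> \<open>0 < a\<close>] by simp
  also have "\<dots> = kappa_Ns N s / 2 * 4 powr s / s * x1 powr s * (\<epsilon> powr (-s) * \<epsilon> powr s)
      * (d powr (2 * s - N) / d powr (2 * s)) * beta_upto_ratio s (- N / 2) a"
    unfolding a_powr using \<open>0 < d\<close> \<open>0 < s\<close> by (simp add: field_simps)
  also have "\<dots> = K_s N s * x1 powr s * d powr (- N) * beta_upto_ratio s (- N / 2) a"
    using \<open>0 < d\<close> assms by (simp add: K_s_eq_kappa_Ns powr_add[symmetric] powr_diff[symmetric])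
  finally show ?thesis
    by (simp add: N_def d_def x1_def a_def)
qed (simp add: green_half_def) \<comment> \<open>at the pole both sides vanish, as \<open>0 powr _ = 0\<close>\<close>

lemma green_half_scaled_le:
  fixes x e :: "'a::euclidean_space" and s :: real
  assumes "e \<in> Basis" "0 < \<epsilon>" "x \<in> half_space e" "0 < s" "s < 1" "2 * s < real DIM('a)"
  shows "0 \<le> \<epsilon> powr (-s) * green_half s e x (\<epsilon> *\<^sub>R e)"
    "\<epsilon> powr (-s) * green_half s e x (\<epsilon> *\<^sub>R e) \<le> \<epsilon> powr (-s) * kappa_Ns (real DIM('a)) s / 2
       * (1 / s - 1 / (s - real DIM('a) / 2)) * norm (x - \<epsilon> *\<^sub>R e) powr (2 * s - real DIM('a))"
proof -
  define a where "a = 4 * (x \<bullet> e) * \<epsilon> / (norm (x - \<epsilon> *\<^sub>R e))\<^sup>2"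
  have "0 \<le> a"
    using assms by (simp add: a_def half_space_def)
  have \<kappa>: "0 < kappa_Ns (real DIM('a)) s"
    using assms by (intro kappa_Ns_pos) auto
  have B: "0 \<le> beta_upto s (- real DIM('a) / 2) a"
    "beta_upto s (- real DIM('a) / 2) a \<le> 1 / s - 1 / (s - real DIM('a) / 2)"
    using beta_upto_nonneg[of s "- real DIM('a) / 2" a] beta_upto_bounded[of s "- real DIM('a) / 2" a]
      \<open>0 \<le> a\<close> assms by auto
  have G: "green_half s e x (\<epsilon> *\<^sub>R e) = kappa_Ns (real DIM('a)) s / 2
      * norm (x - \<epsilon> *\<^sub>R e) powr (2 * s - real DIM('a)) * beta_upto s (- real DIM('a) / 2) a"
    using green_half_eq_beta_upto[OF assms(1-3), of s] by (simp add: a_def)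
  show "0 \<le> \<epsilon> powr (-s) * green_half s e x (\<epsilon> *\<^sub>R e)"
    unfolding G using \<kappa> B(1) by simp
  have "kappa_Ns (real DIM('a)) s / 2 * norm (x - \<epsilon> *\<^sub>R e) powr (2 * s - real DIM('a))
      * beta_upto s (- real DIM('a) / 2) a \<le> kappa_Ns (real DIM('a)) s / 2
      * norm (x - \<epsilon> *\<^sub>R e) powr (2 * s - real DIM('a)) * (1 / s - 1 / (s - real DIM('a) / 2))"
    using \<kappa> B by (intro mult_left_mono) auto
  from mult_left_mono[OF this, of "\<epsilon> powr (-s)"]
  show "\<epsilon> powr (-s) * green_half s e x (\<epsilon> *\<^sub>R e) \<le> \<epsilon> powr (-s) * kappa_Ns (real DIM('a)) s / 2
       * (1 / s - 1 / (s - real DIM('a) / 2)) * norm (x - \<epsilon> *\<^sub>R e) powr (2 * s - real DIM('a))"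
    unfolding G by (simp add: mult_ac)
qed

lemma norm_div_4_le_norm_diff:
  fixes x e :: "'a::real_normed_vector"
  assumes "norm e = 1" "0 < \<epsilon>" "\<epsilon> / 2 < norm (x - \<epsilon> *\<^sub>R e)"
  shows "norm x / 4 \<le> norm (x - \<epsilon> *\<^sub>R e)"
  using norm_triangle_ineq2[of x "\<epsilon> *\<^sub>R e"] assms by auto

lemma green_half_scaled_le_poisson_lim:
  fixes x e :: "'a::euclidean_space" and s :: real
  assumes e: "e \<in> Basis" and "0 < \<epsilon>" "x \<in> half_space e" "0 < s" "s < 1"
    and far: "\<epsilon> / 2 < norm (x - \<epsilon> *\<^sub>R e)"
  shows "\<epsilon> powr (-s) * green_half s e x (\<epsilon> *\<^sub>R e) \<le> 4 powr real DIM('a) * poisson_lim s e x"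
proof -
  define K where "K = K_s (real DIM('a)) s * (x \<bullet> e) powr s"
  define r where "r = beta_upto_ratio s (- real DIM('a) / 2) (4 * (x \<bullet> e) * \<epsilon> / (norm (x - \<epsilon> *\<^sub>R e))\<^sup>2)"
  have "0 < x \<bullet> e"
    using assms by (simp add: half_space_def)
  then have "0 < norm x" "0 \<le> K"
    using K_s_pos[of s "real DIM('a)"] assms by (auto simp: K_def)
  have "0 \<le> r" "r \<le> 1"
    using beta_upto_ratio_nonneg beta_upto_ratio_bounds(2) \<open>0 < x \<bullet> e\<close> assms by (auto simp: r_def)
  have "\<epsilon> powr (-s) * green_half s e x (\<epsilon> *\<^sub>R e) = K * norm (x - \<epsilon> *\<^sub>R e) powr (- real DIM('a)) * r"
    using green_half_scaled_eq[OF assms(1-4)] by (simp add: K_def r_def)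
  also have "\<dots> \<le> K * norm (x - \<epsilon> *\<^sub>R e) powr (- real DIM('a))"
    using \<open>0 \<le> K\<close> \<open>0 \<le> r\<close> \<open>r \<le> 1\<close> by (intro mult_right_le_one_le) auto
  also have "\<dots> \<le> K * (norm x / 4) powr (- real DIM('a))"
    using norm_div_4_le_norm_diff[of e \<epsilon> x] assms \<open>0 < norm x\<close> \<open>0 \<le> K\<close>
    by (intro mult_left_mono powr_mono2') auto
  also have "\<dots> = 4 powr real DIM('a) * poisson_lim s e x"
    using \<open>0 < norm x\<close> by (simp add: K_def poisson_lim_def powr_divide powr_minus field_simps)
  finally show ?thesis .
qed

lemma green_half_scaled_dominated:
  fixes x e :: "'a::euclidean_space" and s w :: real
  assumes e: "e \<in> Basis" and \<epsilon>: "0 < \<epsilon>" and x: "x \<in> half_space e"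
    and s: "0 < s" "s < 1" and N: "2 * s < real DIM('a)" and w: "1 \<le> w"
  shows "\<bar>\<epsilon> powr (-s) * green_half s e x (\<epsilon> *\<^sub>R e) - poisson_lim s e x\<bar> / w
    \<le> 4 powr real DIM('a) * (poisson_lim s e x / w)
      + kappa_Ns (real DIM('a)) s / 2 * (1 / s - 1 / (s - real DIM('a) / 2)) * \<epsilon> powr (-s)
        * (indicator (cball (\<epsilon> *\<^sub>R e) (\<epsilon> / 2)) x * norm (x - \<epsilon> *\<^sub>R e) powr (2 * s - real DIM('a)))"
    (is "\<bar>?f - ?g\<bar> / w \<le> ?c * (?g / w) + ?E")
proof -
  have "1 \<le> ?c"
    by (rule ge_one_powr_ge_zero) auto
  have "1 / (s - real DIM('a) / 2) < 0" "0 < 1 / s"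
    using s N by (simp_all add: divide_pos_neg)
  then have "0 \<le> 1 / s - 1 / (s - real DIM('a) / 2)"
    by linarith
  then have "0 \<le> ?E"
    using kappa_Ns_pos[of s "real DIM('a)"] s by simp
  have "0 \<le> ?f" "0 \<le> ?g"
    using green_half_scaled_le(1)[OF e \<epsilon> x s N] poisson_lim_nonneg[OF s] by auto
  show ?thesis
  proof (cases "x \<in> cball (\<epsilon> *\<^sub>R e) (\<epsilon> / 2)")
    case True
    then have "?f \<le> ?E"
      using green_half_scaled_le(2)[OF e \<epsilon> x s N] by (simp add: mult_ac)
    have "\<bar>?f - ?g\<bar> / w \<le> ?f / w + ?g / w"
      using \<open>0 \<le> ?f\<close> \<open>0 \<le> ?g\<close> w by (simp add: add_divide_distrib[symmetric] divide_right_mono)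
    also have "?f / w \<le> ?f"
      using \<open>0 \<le> ?f\<close> w by (simp add: divide_le_eq mult_le_cancel_left1)
    also have "?g / w \<le> ?c * (?g / w)"
      using \<open>0 \<le> ?g\<close> w \<open>1 \<le> ?c\<close> mult_right_mono[of 1 ?c "?g / w"] by simp
    finally show ?thesis
      using \<open>?f \<le> ?E\<close> by linarith
  next
    case False
    then have "?f \<le> ?c * ?g"
      using green_half_scaled_le_poisson_lim[OF e \<epsilon> x s] by (simp add: dist_norm norm_minus_commute)
    then have "\<bar>?f - ?g\<bar> \<le> ?c * ?g"
      using \<open>0 \<le> ?f\<close> \<open>0 \<le> ?g\<close> mult_right_mono[OF \<open>1 \<le> ?c\<close> \<open>0 \<le> ?g\<close>] by (simp add: abs_le_iff)
    then have "\<bar>?f - ?g\<bar> / w \<le> ?c * (?g / w)"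
      using w by (simp add: divide_right_mono)
    then show ?thesis
      using \<open>0 \<le> ?E\<close> by linarith
  qed
qed

section \<open>Integrability of the majorants\<close>

lemma poisson_lim_weighted_le:
  fixes x e :: "'a::euclidean_space" and s :: real
  assumes e: "e \<in> Basis" and x: "x \<in> half_space e" and s: "0 < s" "s < 1"
  shows "poisson_lim s e x / (1 + norm x powr (real DIM('a) + 2 * s))
    \<le> K_s (real DIM('a)) s * (indicator (cball 0 1) x * norm x powr (s - real DIM('a))
      + indicator (- cball 0 1) x * norm x powr (- (2 * real DIM('a) + s)))"
proof -
  define N where "N = real DIM('a)"
  define K where "K = K_s N s"
  define n where "n = norm x"
  define w where "w = 1 + n powr (N + 2 * s)"
  have "0 < K"
    using s K_s_pos[of s N] by (auto simp: N_def K_def)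
  have "0 < x \<bullet> e" "x \<bullet> e \<le> n"
    using x Basis_le_norm[OF e, of x] by (auto simp: half_space_def n_def)
  then have "0 < n" "1 \<le> w"
    by (auto simp: w_def)
  have "poisson_lim s e x / w = K * n powr (- N) * (x \<bullet> e) powr s / w"
    by (simp add: poisson_lim_def K_def N_def n_def)
  also have "\<dots> \<le> K * n powr (- N) * n powr s / w"
    using \<open>0 < x \<bullet> e\<close> \<open>x \<bullet> e \<le> n\<close> \<open>0 < K\<close> \<open>1 \<le> w\<close> s
    by (intro divide_right_mono mult_left_mono powr_mono2) auto
  also have "\<dots> = K * (n powr (s - N) / w)"
    by (simp add: powr_add[symmetric])
  also have "n powr (s - N) / w
      \<le> indicator (cball 0 1) x * n powr (s - N) + indicator (- cball 0 1) x * n powr (- (2 * N + s))"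
  proof (cases "n \<le> 1")
    case True
    then show ?thesis
      using \<open>1 \<le> w\<close> \<open>0 < n\<close> by (simp add: n_def divide_le_eq mult_le_cancel_left1)
  next
    case False
    have "n powr (s - N) / w \<le> n powr (s - N) / n powr (N + 2 * s)"
      using \<open>0 < n\<close> by (intro divide_left_mono) (auto simp: w_def add_pos_pos)
    also have "\<dots> = n powr (- (2 * N + s))"
      using \<open>0 < n\<close> by (simp add: powr_diff[symmetric])
    finally show ?thesis
      using False by (simp add: n_def)
  qed
  finally show ?thesis
    using \<open>0 < K\<close> by (simp add: mult_left_mono K_def N_def n_def w_def)
qed

lemma poisson_lim_weighted_finite:
  fixes e :: "'a::euclidean_space" and s :: real
  assumes e: "e \<in> Basis" and s: "0 < s" "s < 1"
  shows "(\<integral>\<^sup>+x. ennreal (indicator (half_space e) x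
    * (poisson_lim s e x / (1 + norm x powr (real DIM('a) + 2 * s)))) \<partial>lborel) < \<infinity>"
proof -
  define N where "N = real DIM('a)"
  define K where "K = K_s N s"
  define f1 where "f1 x = indicator (cball 0 1) x * norm x powr (s - N)" for x :: 'a
  define f2 where "f2 x = indicator (- cball 0 1) x * norm x powr (- (2 * N + s))" for x :: 'a
  have "1 \<le> N" "0 < K"
    using s K_s_pos[of s N] by (auto simp: N_def K_def)
  have [measurable]: "cball (0::'a) 1 \<in> sets borel"
    by simp
  have [measurable]: "f1 \<in> borel_measurable borel" "f2 \<in> borel_measurable borel"
    unfolding f1_def f2_def by measurable
  have "ennreal (indicator (half_space e) x * (poisson_lim s e x / (1 + norm x powr (N + 2 * s))))
      \<le> ennreal K * (ennreal (f1 x) + ennreal (f2 x))" for x :: 'a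
  proof (cases "x \<in> half_space e")
    case True
    have "ennreal K * (ennreal (f1 x) + ennreal (f2 x)) = ennreal (K * (f1 x + f2 x))"
      using \<open>0 < K\<close> by (simp add: f1_def f2_def ennreal_mult ennreal_plus)
    then show ?thesis
      using True poisson_lim_weighted_le[OF e True s]
      by (simp add: ennreal_leI K_def N_def f1_def f2_def)
  qed simp
  then have "(\<integral>\<^sup>+x. ennreal (indicator (half_space e) x * (poisson_lim s e x / (1 + norm x powr (N + 2 * s)))) \<partial>lborel)
      \<le> (\<integral>\<^sup>+x. ennreal K * (ennreal (f1 x) + ennreal (f2 x)) \<partial>lborel)"
    by (intro nn_integral_mono)
  also have "\<dots> = ennreal K * ((\<integral>\<^sup>+x. ennreal (f1 x) \<partial>lborel) + (\<integral>\<^sup>+x. ennreal (f2 x) \<partial>lborel))"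
    by (simp add: nn_integral_cmult nn_integral_add)
  also have "\<dots> < \<infinity>"
  proof -
    have "(\<integral>\<^sup>+x. ennreal (f1 x) \<partial>lborel) < \<infinity>"
      using nn_integral_cball_norm_powr_le[of "N - s" 1 "0::'a"] s \<open>1 \<le> N\<close>
      unfolding f1_def N_def by (auto simp: le_less_trans[OF _ ennreal_less_top])
    moreover have "(\<integral>\<^sup>+x. ennreal (f2 x) \<partial>lborel) < \<infinity>"
      using nn_integral_outside_cball_norm_powr_finite[of "2 * N + s" 1 "0::'a"] s \<open>1 \<le> N\<close>
      unfolding f2_def N_def by auto
    ultimately show ?thesis
      by (simp add: ennreal_mult_less_top)
  qed
  finally show ?thesis
    by (simp add: N_def)
qed

lemma nn_integral_pole_part_le:
  fixes e :: "'a::euclidean_space" and s c :: real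
  assumes "0 < s" "2 * s < real DIM('a)" "0 \<le> c"
  obtains C where "\<And>\<epsilon>. 0 < \<epsilon> \<Longrightarrow> (\<integral>\<^sup>+x. ennreal (c * \<epsilon> powr (-s)
    * (indicator (cball (\<epsilon> *\<^sub>R e) (\<epsilon> / 2)) x * norm (x - \<epsilon> *\<^sub>R e) powr (2 * s - real DIM('a)))) \<partial>lborel)
      \<le> ennreal (C * \<epsilon> powr s)"
proof
  define \<alpha> where "\<alpha> = real DIM('a) - 2 * s"
  define V where "V = unit_ball_vol (real DIM('a)) * 2 powr \<alpha> / (1 - (1/2) powr (2 * s))"
  have "0 < \<alpha>" "\<alpha> < real DIM('a)"
    using assms by (auto simp: \<alpha>_def)
  have "(1/2::real) powr (2 * s) < 1"
    using powr_less_mono2[of "2 * s" "1/2" 1] assms by simp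
  then have "0 \<le> V"
    by (simp add: V_def)
  fix \<epsilon> :: real assume "0 < \<epsilon>"
  have [measurable]: "cball (\<epsilon> *\<^sub>R e) (\<epsilon> / 2) \<in> sets borel"
    by simp
  have "(\<integral>\<^sup>+x. ennreal (c * \<epsilon> powr (-s) * (indicator (cball (\<epsilon> *\<^sub>R e) (\<epsilon> / 2)) x
      * norm (x - \<epsilon> *\<^sub>R e) powr (2 * s - real DIM('a)))) \<partial>lborel)
    = ennreal (c * \<epsilon> powr (-s)) * (\<integral>\<^sup>+x. ennreal (indicator (cball (\<epsilon> *\<^sub>R e) (\<epsilon> / 2)) x
      * norm (x - \<epsilon> *\<^sub>R e) powr (- \<alpha>)) \<partial>lborel)"
    using assms by (subst nn_integral_ennreal_cmult) (auto simp: \<alpha>_def)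
  also have "\<dots> \<le> ennreal (c * \<epsilon> powr (-s)) * ennreal (V * (\<epsilon> / 2) powr (2 * s))"
    using nn_integral_cball_norm_powr_le[OF \<open>0 < \<alpha>\<close> \<open>\<alpha> < real DIM('a)\<close>, of "\<epsilon> / 2" "\<epsilon> *\<^sub>R e"] \<open>0 < \<epsilon>\<close>
    by (intro mult_left_mono) (auto simp: V_def \<alpha>_def mult_ac)
  also have "\<dots> = ennreal (c * V / 2 powr (2 * s) * \<epsilon> powr s)"
  proof -
    have "\<epsilon> powr s = \<epsilon> powr (-s) * \<epsilon> powr (2 * s)"
      using \<open>0 < \<epsilon>\<close> by (simp add: powr_add[symmetric])
    then show ?thesis
      using \<open>0 < \<epsilon>\<close> \<open>0 \<le> c\<close> \<open>0 \<le> V\<close> by (simp add: ennreal_mult[symmetric] powr_divide)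
  qed
  finally show "(\<integral>\<^sup>+x. ennreal (c * \<epsilon> powr (-s) * (indicator (cball (\<epsilon> *\<^sub>R e) (\<epsilon> / 2)) x
      * norm (x - \<epsilon> *\<^sub>R e) powr (2 * s - real DIM('a)))) \<partial>lborel) \<le> ennreal (c * V / 2 powr (2 * s) * \<epsilon> powr s)" .
qed

lemma nn_integral_pole_part_tendsto_0:
  fixes e :: "'a::euclidean_space" and s c :: real
  assumes "0 < s" "2 * s < real DIM('a)" "0 \<le> c"
  shows "((\<lambda>\<epsilon>. \<integral>\<^sup>+x. ennreal (c * \<epsilon> powr (-s) * (indicator (cball (\<epsilon> *\<^sub>R e) (\<epsilon> / 2)) x
    * norm (x - \<epsilon> *\<^sub>R e) powr (2 * s - real DIM('a)))) \<partial>lborel) \<longlongrightarrow> 0) (at_right 0)"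
proof -
  obtain C where bound: "\<And>\<epsilon>. 0 < \<epsilon> \<Longrightarrow> (\<integral>\<^sup>+x. ennreal (c * \<epsilon> powr (-s)
    * (indicator (cball (\<epsilon> *\<^sub>R e) (\<epsilon> / 2)) x * norm (x - \<epsilon> *\<^sub>R e) powr (2 * s - real DIM('a)))) \<partial>lborel)
      \<le> ennreal (C * \<epsilon> powr s)"
    using nn_integral_pole_part_le[OF assms] by blast
  have "\<forall>\<^sub>F \<epsilon> in at_right 0. 0 \<le> (\<epsilon>::real)"
    using eventually_at_right_less[of 0] by (auto elim: eventually_mono)
  then have "((\<lambda>\<epsilon>. C * \<epsilon> powr s) \<longlongrightarrow> C * 0) (at_right 0)"
    using assms by (intro tendsto_mult tendsto_const tendsto_zero_powrI[OF tendsto_ident_at tendsto_const]) auto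
  then have lim: "((\<lambda>\<epsilon>. ennreal (C * \<epsilon> powr s)) \<longlongrightarrow> 0) (at_right 0)"
    using tendsto_ennrealI[of "\<lambda>\<epsilon>. C * \<epsilon> powr s" 0] by simp
  have upper: "\<forall>\<^sub>F \<epsilon> in at_right 0. (\<integral>\<^sup>+x. ennreal (c * \<epsilon> powr (-s) * (indicator (cball (\<epsilon> *\<^sub>R e) (\<epsilon> / 2)) x
      * norm (x - \<epsilon> *\<^sub>R e) powr (2 * s - real DIM('a)))) \<partial>lborel) \<le> ennreal (C * \<epsilon> powr s)"
    using eventually_at_right_less[of 0] by eventually_elim (rule bound)
  show ?thesis
    by (rule tendsto_sandwich[OF _ upper tendsto_const lim]) simp
qed

section \<open>Convergence of the Poisson kernel\<close>

lemma norm_le_norm_add_Basis: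
  fixes x e :: "'a::euclidean_space"
  assumes "e \<in> Basis" "0 \<le> x \<bullet> e" "0 \<le> \<epsilon>"
  shows "norm x \<le> norm (x + \<epsilon> *\<^sub>R e)"
proof -
  have "x \<bullet> x \<le> (x + \<epsilon> *\<^sub>R e) \<bullet> (x + \<epsilon> *\<^sub>R e)"
    using assms by (simp add: inner_add_left inner_add_right inner_Basis inner_commute)
  then show ?thesis
    by (simp add: norm_le)
qed

lemma poisson_half_uniform_limit:
  fixes e :: "'a::euclidean_space" and s :: real
  assumes e: "e \<in> Basis" and C: "compact C" "C \<subseteq> half_space e"
  shows "uniform_limit C (\<lambda>\<epsilon> x. \<epsilon> powr s * poisson_half s e x (- (\<epsilon> *\<^sub>R e))) (poisson_lim s e) (at_right 0)"
proof (rule uniform_limit_at_right_0_of_continuous_on[OF C(1) zero_less_one])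
  let ?F = "\<lambda>(\<epsilon>, x). K_s (real DIM('a)) s * (x \<bullet> e) powr s * norm (x + \<epsilon> *\<^sub>R e) powr (- real DIM('a))"
  have "0 < (x + \<epsilon> *\<^sub>R e) \<bullet> e" if "x \<in> C" "0 \<le> \<epsilon>" for x \<epsilon>
    using that C e by (auto simp: half_space_def inner_add_left inner_Basis add_pos_nonneg)
  then have "x + \<epsilon> *\<^sub>R e \<noteq> 0" if "x \<in> C" "0 \<le> \<epsilon>" for x \<epsilon>
    using that by fastforce
  then show "continuous_on ({0..1} \<times> C) ?F"
    using C by (auto simp: split_beta half_space_def intro!: continuous_intros)
  show "\<epsilon> powr s * poisson_half s e x (- (\<epsilon> *\<^sub>R e)) = ?F (\<epsilon>, x)" if "\<epsilon> \<in> {0<..1}" "x \<in> C" for \<epsilon> x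
    using poisson_half_scaled_eq[OF e, of \<epsilon> x s] that C by auto
  show "poisson_lim s e x = ?F (0, x)" for x
    by (simp add: poisson_lim_def mult_ac)
qed

lemma poisson_half_L1s_conv:
  fixes e :: "'a::euclidean_space" and s :: real
  assumes e: "e \<in> Basis" and s: "0 < s" "s < 1"
  shows "L1s_conv_at_right0 s e (\<lambda>\<epsilon> x. \<epsilon> powr s * poisson_half s e x (- (\<epsilon> *\<^sub>R e))) (poisson_lim s e)"
proof (rule L1s_conv_at_right0I[where G = "\<lambda>x. poisson_lim s e x / (1 + norm x powr (real DIM('a) + 2 * s))"
      and E = "\<lambda>_ _. 0"])
  show "0 \<le> poisson_lim s e x / (1 + norm x powr (real DIM('a) + 2 * s))" for x
    using poisson_lim_nonneg[OF s, of e x] by (simp add: add_pos_nonneg)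
  show "\<forall>\<^sub>F \<epsilon> in at_right 0. \<forall>x\<in>half_space e.
      \<bar>\<epsilon> powr s * poisson_half s e x (- (\<epsilon> *\<^sub>R e)) - poisson_lim s e x\<bar> / (1 + norm x powr (real DIM('a) + 2 * s))
      \<le> poisson_lim s e x / (1 + norm x powr (real DIM('a) + 2 * s)) + 0"
    using eventually_at_right_less[of 0]
  proof eventually_elim
    case (elim \<epsilon>)
    show ?case
    proof
      fix x assume x: "x \<in> half_space e"
      have "0 < x \<bullet> e"
        using x by (simp add: half_space_def)
      then have "norm (x + \<epsilon> *\<^sub>R e) powr (- real DIM('a)) \<le> norm x powr (- real DIM('a))"
        using norm_le_norm_add_Basis[OF e, of x \<epsilon>] elim by (intro powr_mono2') auto
      then have "0 \<le> \<epsilon> powr s * poisson_half s e x (- (\<epsilon> *\<^sub>R e))"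
        "\<epsilon> powr s * poisson_half s e x (- (\<epsilon> *\<^sub>R e)) \<le> poisson_lim s e x"
        using poisson_half_scaled_eq[OF e elim x, of s] K_s_pos[of s "real DIM('a)"] s
        by (auto simp: poisson_lim_def mult_ac intro!: mult_left_mono)
      then show "\<bar>\<epsilon> powr s * poisson_half s e x (- (\<epsilon> *\<^sub>R e)) - poisson_lim s e x\<bar>
          / (1 + norm x powr (real DIM('a) + 2 * s))
        \<le> poisson_lim s e x / (1 + norm x powr (real DIM('a) + 2 * s)) + 0"
        by (simp add: divide_right_mono add_pos_nonneg)
    qed
  qed
qed (use poisson_half_uniform_limit[OF e] poisson_lim_weighted_finite[OF e s] in auto)

section \<open>Convergence of the Green kernel\<close>

lemma compact_subset_half_space_inner_ge:
  fixes e :: "'a::euclidean_space"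
  assumes "compact C" "C \<subseteq> half_space e"
  obtains \<delta> where "0 < \<delta>" "\<And>x. x \<in> C \<Longrightarrow> \<delta> \<le> x \<bullet> e"
proof (cases "C = {}")
  case False
  have "continuous_on C (\<lambda>x. x \<bullet> e)"
    by (intro continuous_intros)
  then obtain x0 where "x0 \<in> C" "\<And>x. x \<in> C \<Longrightarrow> x0 \<bullet> e \<le> x \<bullet> e"
    using continuous_attains_inf[OF assms(1) False] by blast
  then show ?thesis
    using that[of "x0 \<bullet> e"] assms(2) by (auto simp: half_space_def)
qed (use that[of 1] in auto)

lemma norm_diff_scaleR_Basis_ge:
  fixes x e :: "'a::euclidean_space"
  assumes "e \<in> Basis" "\<delta> \<le> x \<bullet> e" "\<epsilon> \<le> \<delta> / 2"
  shows "\<delta> / 2 \<le> norm (x - \<epsilon> *\<^sub>R e)"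
proof -
  have "\<delta> / 2 \<le> (x - \<epsilon> *\<^sub>R e) \<bullet> e"
    using assms by (simp add: inner_diff_left inner_Basis)
  also have "\<dots> \<le> norm (x - \<epsilon> *\<^sub>R e)"
    using Basis_le_norm[OF assms(1)] by (rule abs_le_D1)
  finally show ?thesis .
qed

lemma continuous_on_green_half_scaled_extension:
  fixes e :: "'a::euclidean_space" and s :: real
  assumes e: "e \<in> Basis" and "0 < s" "compact C" "0 < \<delta>" and \<delta>: "\<And>x. x \<in> C \<Longrightarrow> \<delta> \<le> x \<bullet> e"
  shows "continuous_on ({0..\<delta> / 2} \<times> C) (\<lambda>p. K_s (real DIM('a)) s * (snd p \<bullet> e) powr s
    * norm (snd p - fst p *\<^sub>R e) powr (- real DIM('a)) * beta_upto_ratio s (- real DIM('a) / 2)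
      (4 * (snd p \<bullet> e) * fst p / (norm (snd p - fst p *\<^sub>R e))\<^sup>2))"
proof -
  obtain R where "0 < R" and R: "\<And>x. x \<in> C \<Longrightarrow> norm x \<le> R"
    using compact_imp_bounded[OF assms(3)] unfolding bounded_pos by blast
  define S where "S = {0..\<delta> / 2} \<times> C"
  define a where "a p = 4 * (snd p \<bullet> e) * fst p / (norm (snd p - fst p *\<^sub>R e))\<^sup>2" for p :: "real \<times> 'a"
  define M where "M = 4 * R * (\<delta> / 2) / (\<delta> / 2)\<^sup>2"
  have p: "0 \<le> fst p" "fst p \<le> \<delta> / 2" "snd p \<in> C" "0 < snd p \<bullet> e"
    "\<delta> / 2 \<le> norm (snd p - fst p *\<^sub>R e)" if "p \<in> S" for p
    using that \<delta> \<open>0 < \<delta>\<close> norm_diff_scaleR_Basis_ge[OF e] by (force simp: S_def)+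
  have a_range: "a p \<in> {0..M}" if "p \<in> S" for p
  proof -
    have "(\<delta> / 2)\<^sup>2 \<le> (norm (snd p - fst p *\<^sub>R e))\<^sup>2"
      using p[OF that] \<open>0 < \<delta>\<close> by (intro power_mono) auto
    moreover have "4 * (snd p \<bullet> e) * fst p \<le> 4 * R * (\<delta> / 2)"
      using p[OF that] R[of "snd p"] Basis_le_norm[OF e, of "snd p"] by (intro mult_mono) auto
    ultimately have "a p \<le> M"
      unfolding a_def M_def using \<open>0 < \<delta>\<close> \<open>0 < R\<close> by (intro frac_le) auto
    then show ?thesis
      using p[OF that] by (simp add: a_def)
  qed
  have pole_pos: "0 < norm (snd p - fst p *\<^sub>R e)" if "p \<in> S" for p
    using p(5)[OF that] \<open>0 < \<delta>\<close> by linarith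
  have cont_a: "continuous_on S a"
    unfolding a_def using pole_pos by (intro continuous_intros) auto
  have cont_beta: "continuous_on {0..M} (beta_upto_ratio s (- real DIM('a) / 2))"
    using \<open>0 < s\<close> \<open>0 < R\<close> \<open>0 < \<delta>\<close> by (intro continuous_on_beta_upto_ratio) (auto simp: M_def)
  have "continuous_on S (\<lambda>p. beta_upto_ratio s (- real DIM('a) / 2) (a p))"
    using a_range by (intro continuous_on_compose2[OF cont_beta cont_a]) blast
  then show ?thesis
    unfolding S_def[symmetric] a_def[symmetric] using p(4) pole_pos
    by (intro continuous_intros) (auto dest!: p(4))
qed

lemma green_half_uniform_limit:
  fixes e :: "'a::euclidean_space" and s :: real
  assumes e: "e \<in> Basis" and "0 < s" and C: "compact C" "C \<subseteq> half_space e"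
  shows "uniform_limit C (\<lambda>\<epsilon> x. \<epsilon> powr (-s) * green_half s e x (\<epsilon> *\<^sub>R e)) (poisson_lim s e) (at_right 0)"
proof -
  obtain \<delta> where "0 < \<delta>" and \<delta>: "\<And>x. x \<in> C \<Longrightarrow> \<delta> \<le> x \<bullet> e"
    using compact_subset_half_space_inner_ge[OF C] by blast
  show ?thesis
  proof (rule uniform_limit_at_right_0_of_continuous_on[OF C(1) _
        continuous_on_green_half_scaled_extension[OF e \<open>0 < s\<close> C(1) \<open>0 < \<delta>\<close> \<delta>]])
    show "\<epsilon> powr (-s) * green_half s e x (\<epsilon> *\<^sub>R e) = K_s (real DIM('a)) s * (snd (\<epsilon>, x) \<bullet> e) powr s
      * norm (snd (\<epsilon>, x) - fst (\<epsilon>, x) *\<^sub>R e) powr (- real DIM('a)) * beta_upto_ratio s (- real DIM('a) / 2)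
        (4 * (snd (\<epsilon>, x) \<bullet> e) * fst (\<epsilon>, x) / (norm (snd (\<epsilon>, x) - fst (\<epsilon>, x) *\<^sub>R e))\<^sup>2)"
      if "\<epsilon> \<in> {0<..\<delta> / 2}" "x \<in> C" for \<epsilon> x
      using green_half_scaled_eq[OF e _ _ \<open>0 < s\<close>, of \<epsilon> x] that C by auto
  qed (use \<open>0 < \<delta>\<close> in \<open>auto simp: beta_upto_ratio_def poisson_lim_def mult_ac\<close>)
qed

lemma green_half_L1s_conv:
  fixes e :: "'a::euclidean_space" and s :: real
  assumes e: "e \<in> Basis" and s: "0 < s" "s < 1" and N: "2 * s < real DIM('a)"
  shows "L1s_conv_at_right0 s e (\<lambda>\<epsilon> x. \<epsilon> powr (-s) * green_half s e x (\<epsilon> *\<^sub>R e)) (poisson_lim s e)"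
proof -
  define c where "c = kappa_Ns (real DIM('a)) s / 2 * (1 / s - 1 / (s - real DIM('a) / 2))"
  have "1 / (s - real DIM('a) / 2) < 0" "0 < 1 / s"
    using s N by (simp_all add: divide_pos_neg)
  then have "0 \<le> 1 / s - 1 / (s - real DIM('a) / 2)"
    by linarith
  then have "0 \<le> c"
    unfolding c_def using kappa_Ns_pos[of s "real DIM('a)"] s by simp
  have [measurable]: "cball p r \<in> sets borel" "half_space e \<in> sets borel" for p :: 'a and r
    using open_half_space[of e] by auto
  show ?thesis
  proof (rule L1s_conv_at_right0I[where G = "\<lambda>x. 4 powr real DIM('a)
      * (poisson_lim s e x / (1 + norm x powr (real DIM('a) + 2 * s)))"])
    show "(\<integral>\<^sup>+x. ennreal (indicator (half_space e) x * (4 powr real DIM('a) * (poisson_lim s e x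
        / (1 + norm x powr (real DIM('a) + 2 * s))))) \<partial>lborel) < \<infinity>"
    proof -
      have "(\<integral>\<^sup>+x. ennreal (indicator (half_space e) x * (4 powr real DIM('a) * (poisson_lim s e x
          / (1 + norm x powr (real DIM('a) + 2 * s))))) \<partial>lborel)
        = ennreal (4 powr real DIM('a)) * (\<integral>\<^sup>+x. ennreal (indicator (half_space e) x * (poisson_lim s e x
          / (1 + norm x powr (real DIM('a) + 2 * s)))) \<partial>lborel)"
        using poisson_lim_nonneg[OF s]
        by (subst nn_integral_ennreal_cmult[symmetric])
          (auto simp: mult_ac intro!: divide_nonneg_pos add_pos_nonneg mult_nonneg_nonneg)
      then show ?thesis
        using poisson_lim_weighted_finite[OF e s] by (simp add: ennreal_mult_less_top)
    qed
    show "\<forall>\<^sub>F \<epsilon> in at_right 0. \<forall>x\<in>half_space e.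
      \<bar>\<epsilon> powr (-s) * green_half s e x (\<epsilon> *\<^sub>R e) - poisson_lim s e x\<bar> / (1 + norm x powr (real DIM('a) + 2 * s))
        \<le> 4 powr real DIM('a) * (poisson_lim s e x / (1 + norm x powr (real DIM('a) + 2 * s)))
          + c * \<epsilon> powr (-s) * (indicator (cball (\<epsilon> *\<^sub>R e) (\<epsilon> / 2)) x
            * norm (x - \<epsilon> *\<^sub>R e) powr (2 * s - real DIM('a)))"
      using eventually_at_right_less[of 0] unfolding c_def
      by eventually_elim (intro ballI green_half_scaled_dominated[OF e _ _ s N]; simp)
    show "((\<lambda>\<epsilon>. \<integral>\<^sup>+x. ennreal (c * \<epsilon> powr (-s) * (indicator (cball (\<epsilon> *\<^sub>R e) (\<epsilon> / 2)) x
        * norm (x - \<epsilon> *\<^sub>R e) powr (2 * s - real DIM('a)))) \<partial>lborel) \<longlongrightarrow> 0) (at_right 0)"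
      by (rule nn_integral_pole_part_tendsto_0[OF s(1) N \<open>0 \<le> c\<close>])
  qed (use green_half_uniform_limit[OF e s(1)] \<open>0 \<le> c\<close> poisson_lim_nonneg[OF s] in
       \<open>auto intro!: mult_nonneg_nonneg divide_nonneg_pos add_pos_nonneg\<close>)
qed

theorem theorem1p3:
  fixes s :: real and e :: "'a::euclidean_space"
  assumes "0 < s" "s < 1" "real DIM('a) > 2 * s" "e \<in> Basis"
  shows "L1s_conv_at_right0 s e (\<lambda>\<epsilon> x. \<epsilon> powr (-s) * green_half s e x (\<epsilon> *\<^sub>R e)) (poisson_lim s e)
    \<and> (\<forall>C. compact C \<and> C \<subseteq> half_space e \<longrightarrow>
          uniform_limit C (\<lambda>\<epsilon> x. \<epsilon> powr (-s) * green_half s e x (\<epsilon> *\<^sub>R e)) (poisson_lim s e) (at_right 0))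
    \<and> L1s_conv_at_right0 s e (\<lambda>\<epsilon> x. \<epsilon> powr s * poisson_half s e x (- (\<epsilon> *\<^sub>R e))) (poisson_lim s e)
    \<and> (\<forall>C. compact C \<and> C \<subseteq> half_space e \<longrightarrow>
          uniform_limit C (\<lambda>\<epsilon> x. \<epsilon> powr s * poisson_half s e x (- (\<epsilon> *\<^sub>R e))) (poisson_lim s e) (at_right 0))"
  using green_half_L1s_conv[OF assms(4,1,2,3)] green_half_uniform_limit[OF assms(4,1)]
    poisson_half_L1s_conv[OF assms(4,1,2)] poisson_half_uniform_limit[OF assms(4)]
  by blast

end
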